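(* Let $x,t$ be formal variables. Then, as formal power series in $t$ with coefficients polynomial in $x$, $$\sum_{n\ge 1}\sum_{[\pi]\in\mathfrak{C}_n^o}x^{\operatorname{drop}_{oo}([\pi])}t^n = \sum_{m\ge 1}\frac{m!(m-1)!\,t^{2m}}{\prod_{k=1}^m \big(1+k^2(1-x)t^2\big)}+\sum_{m\ge 1}\frac{\big((m-1)!\big)^2t^{2m-1}}{\prod_{k=1}^m \big(1+k^2(1-x)t^2\big)}.$$
   Context: For $n\ge1$, a cycle on $[n]=\{1,\dots,n\}$ is an equivalence class $[\pi]$ of permutations $\pi=\pi_1\cdots\pi_n$ of $[n]$ (in one-line notation) under cyclic rotation of the entries; the set of cycles on $[n]$ is $\mathfrak{C}_n$. Each cycle is represented by the permutation $\pi$ with $\pi_1=1$, and indices are read modulo $n$ (so $\pi_{n+1}=\pi_1$). A drop of $[\pi]$ is a consecutive pair $(\pi_i,\pi_{i+1})$, $1\le i\le n$, with $\pi_i>\pi_{i+1}$; drops do not depend on the choice of rotation. By convention, the unique cycle $[(1)]\in\mathfrak{C}_1$ has exactly one drop $(\star,1)$, where $\star$ is considered neither even nor odd. A drop $(a,b)$ is odd-odd if $a$ and $b$ are both odd, and even-odd if $a$ is even and $b$ is odd. $\operatorname{drop}_{oo}([\pi])$ and $\operatorname{drop}_{eo}([\pi])$ denote the numbers of odd-odd and even-odd drops of $[\pi]$, respectively. Finally $\mathfrak{C}_n^o$ is the set of cycles $[\pi]\in\mathfrak{C}_n$ such that for every drop $(\pi_i,\pi_{i+1})$ of $[\pi]$,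 the entry $\pi_{i+1}$ is odd. *)

theory Defs
  imports "HOL-Computational_Algebra.Formal_Power_Series" "HOL-Computational_Algebra.Polynomial"
begin

text \<open>Cycles on [n] are represented by their unique representative permutation
  (in one-line notation, as a list) whose first entry is 1.\<close>
definition cycle_reps :: "nat \<Rightarrow> nat list set" where
  "cycle_reps n = {xs. n \<ge> 1 \<and> distinct xs \<and> set xs = {1..n} \<and> hd xs = 1}"

definition cyc_next :: "nat list \<Rightarrow> nat \<Rightarrow> nat" where
  "cyc_next xs i = xs ! ((i + 1) mod length xs)"

definition drops :: "nat list \<Rightarrow> (nat \<times> nat) list" where
  "drops xs = [(xs ! i, cyc_next xs i). i \<leftarrow> [0..<length xs], xs ! i > cyc_next xs i]"

definition drop_oo :: "nat list \<Rightarrow> nat" where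
  "drop_oo xs = length (filter (\<lambda>(a,b). odd a \<and> odd b) (drops xs))"

text \<open>The set C_n^o: every drop ends in an odd entry.  (For n = 1 the conventional
  drop (star,1) ends in 1, which is odd, so [1] belongs to it; it contributes no
  odd-odd drop.)\<close>
definition cycles_odd :: "nat \<Rightarrow> nat list set" where
  "cycles_odd n = {xs \<in> cycle_reps n. \<forall>(a,b) \<in> set (drops xs). odd b}"

abbreviation polyX :: "int poly" where "polyX \<equiv> [:0, 1:]"

definition lhs_gf :: "int poly fps" where
  "lhs_gf = Abs_fps (\<lambda>n. \<Sum>xs\<in>cycles_odd n. polyX ^ drop_oo xs)"

definition denom :: "nat \<Rightarrow> int poly fps" where
  "denom m = (\<Prod>k = 1..m. 1 + fps_const (of_nat (k^2) * (1 - polyX)) * fps_X ^ 2)"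

text \<open>Its multiplicative inverse in the power series ring (library construction of
  the inverse of a series whose constant term is invertible; here with inverse 1).\<close>
definition denom_inv :: "nat \<Rightarrow> int poly fps" where
  "denom_inv m = fps_right_inverse (denom m) 1"

definition termA :: "nat \<Rightarrow> int poly fps" where
  "termA m = fps_const (of_nat (fact m * fact (m - 1))) * fps_X ^ (2 * m) * denom_inv m"

definition termB :: "nat \<Rightarrow> int poly fps" where
  "termB m = fps_const (of_nat ((fact (m - 1))^2)) * fps_X ^ (2 * m - 1) * denom_inv m"

end

theory Submission
  imports Defs
begin

(*
  Write P_n(x) for the sum of x^drop_oo over C_n^o.  Removing the largest letter n+1 from a cycle
  in C_{n+1}^o (n >= 1) leaves a cycle in C_n^o.  Conversely, inserting n+1 between consecutive
  entries a and b replaces the pair (a,b) by the ascent (a,n+1) and the drop (n+1,b), so the result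
  lies in C_{n+1}^o iff the original cycle lies in C_n^o and b is odd.  There are (n+1) div 2 odd
  entries b, and the insertion loses an odd-odd drop iff (a,b) was one and gains one iff n+1 is odd:
      P_{n+1} = x^[n+1 odd] (c P_n + (1 - x) P_n'),   c = (n+1) div 2.
  On powers of y = x - 1 the operator p -> c p + (1 - x) p' is diagonal, y^j -> (c - j) y^j, so the
  recurrence is solved explicitly by sums of (m!)^2 h_j y^j (for P_{2N+1}) and (m+1)! m! h_j y^j
  (for P_{2N+2}), where h_j = h_j(1^2, ..., (m+1)^2) is a complete homogeneous symmetric
  polynomial.  These are the coefficients of the right-hand side, since
      1 / prod_{k=1..m} (1 + k^2 (1 - x) t^2) = sum_j h_j(1^2, ..., m^2) y^j t^(2j).
*)

unbundle fps_syntax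

section \<open>The operator p \<mapsto> c p + (1 - x) p'\<close>

definition ins_op :: "nat \<Rightarrow> 'a::idom poly \<Rightarrow> 'a poly" where
  "ins_op c p = of_nat c * p + (1 - [:0, 1:]) * pderiv p"

lemma ins_op_add: "ins_op c (p + q) = ins_op c p + ins_op c q"
  by (simp add: ins_op_def pderiv_add algebra_simps)

lemma ins_op_sum: "ins_op c (\<Sum>x\<in>A. f x) = (\<Sum>x\<in>A. ins_op c (f x))"
  by (induction A rule: infinite_finite_induct) (simp_all add: ins_op_add ins_op_def[of _ 0])

lemma ins_op_mult_of_nat: "ins_op c (of_nat a * p) = of_nat a * ins_op c p"
  unfolding ins_op_def of_nat_mult_conv_smult pderiv_smult by (simp add: smult_add_right mult_ac)

lemma ins_op_power_X:
  assumes "k \<le> c"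
  shows "ins_op c ([:0, 1:] ^ k) =
           of_nat k * [:0, 1:] ^ (k - 1) + of_nat (c - k) * ([:0, 1:] ^ k :: 'a::idom poly)"
proof (cases k)
  case (Suc j)
  have "pderiv ([:0, 1:] ^ k :: 'a poly) = of_nat k * [:0, 1:] ^ j"
    by (simp add: Suc pderiv_power_Suc pderiv_pCons of_nat_mult_conv_smult
        del: power_Suc of_nat_Suc)
  then show ?thesis
    using assms by (simp add: ins_op_def Suc of_nat_diff algebra_simps del: of_nat_Suc)
qed (simp add: ins_op_def)

lemma ins_op_power_X_minus_1:
  assumes "j \<le> c"
  shows "ins_op c (([:0, 1:] - 1) ^ j) = of_nat (c - j) * (([:0, 1:] - 1) ^ j :: 'a::idom poly)"
proof (cases j)
  case (Suc i)
  have "[:0, 1:] - 1 = ([:-1, 1:] :: 'a poly)"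
    by (simp add: one_pCons)
  then have "pderiv (([:0, 1:] - 1) ^ j :: 'a poly) = of_nat j * ([:0, 1:] - 1) ^ i"
    by (simp add: Suc pderiv_power_Suc pderiv_pCons of_nat_mult_conv_smult
        del: power_Suc of_nat_Suc)
  then show ?thesis
    using assms by (simp add: ins_op_def Suc of_nat_diff algebra_simps del: of_nat_Suc)
qed (simp add: ins_op_def)

lemma ins_op_mult_power_X_minus_1:
  assumes "j \<le> c"
  shows "ins_op c (of_nat a * ([:0, 1:] - 1) ^ j) =
           of_nat (a * (c - j)) * (([:0, 1:] - 1) ^ j :: 'a::idom poly)"
  by (simp add: ins_op_mult_of_nat ins_op_power_X_minus_1[OF assms])

lemma ins_op_sum_mult_power_X_minus_1:
  "ins_op N (\<Sum>m<N. of_nat (a m) * ([:0, 1:] - 1) ^ (N - Suc m)) =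
   (\<Sum>m<N. of_nat (a m * Suc m) * (([:0, 1:] - 1) ^ (N - Suc m) :: 'a::idom poly))"
  unfolding ins_op_sum
proof (rule sum.cong)
  fix m assume "m \<in> {..<N}"
  then have "N - (N - Suc m) = Suc m"
    by simp
  then show "ins_op N (of_nat (a m) * ([:0, 1:] - 1) ^ (N - Suc m)) =
      of_nat (a m * Suc m) * (([:0, 1:] - 1) ^ (N - Suc m) :: 'a poly)"
    by (simp only: ins_op_mult_power_X_minus_1[OF diff_le_self])
qed simp

section \<open>Cyclic pairs of a list\<close>

definition cyc_pairs :: "'a list \<Rightarrow> ('a \<times> 'a) list" where
  "cyc_pairs xs = zip xs (rotate1 xs)"

lemma cyc_pairs_nth: "i < length xs \<Longrightarrow> cyc_pairs xs ! i = (xs ! i, rotate1 xs ! i)"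
  by (simp add: cyc_pairs_def)

lemma length_cyc_pairs [simp]: "length (cyc_pairs xs) = length xs"
  by (simp add: cyc_pairs_def)

lemma drops_eq_filter_cyc_pairs: "drops xs = filter (\<lambda>(a, b). b < a) (cyc_pairs xs)"
proof -
  have "cyc_pairs xs = map (\<lambda>i. (xs ! i, cyc_next xs i)) [0..<length xs]"
    unfolding cyc_pairs_def cyc_next_def by (rule nth_equalityI) (auto simp: nth_rotate1)
  moreover have "concat (map (\<lambda>i. if P i then [f i] else []) ns) = map f (filter P ns)"
    for P f and ns :: "nat list"
    by (induction ns) auto
  ultimately show ?thesis
    unfolding drops_def by (simp add: filter_map o_def)
qed

lemma cyc_pairs_rotate: "cyc_pairs (rotate k xs) = rotate k (cyc_pairs xs)"
proof -
  have "cyc_pairs (rotate1 xs) = rotate1 (cyc_pairs xs)" for xs :: "'a list"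
  proof (rule nth_equalityI)
    fix i assume "i < length (cyc_pairs (rotate1 xs))"
    moreover from this have "Suc i mod length xs < length xs"
      by (cases xs) simp_all
    ultimately show "cyc_pairs (rotate1 xs) ! i = rotate1 (cyc_pairs xs) ! i"
      by (simp add: cyc_pairs_def nth_rotate1 mod_Suc_eq)
  qed simp
  then show ?thesis
    by (induction k) simp_all
qed

lemma cyc_pairs_conv_butlast:
  "w \<noteq> [] \<Longrightarrow> cyc_pairs w = zip (butlast w) (tl w) @ [(last w, hd w)]"
  by (cases w rule: rev_cases) (simp_all add: cyc_pairs_def rotate1_hd_tl)

lemma mset_rotate: "mset (rotate k xs) = mset xs"
  by (metis append_take_drop_id mset_append rotate_drop_take union_commute)

definition ins_after :: "'a list \<Rightarrow> nat \<Rightarrow> 'a \<Rightarrow> 'a list" where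
  "ins_after ys i n = take (Suc i) ys @ n # drop (Suc i) ys"

lemma mset_cyc_pairs_ins_after:
  assumes "i < length ys"
  shows "mset (cyc_pairs (ins_after ys i n)) + {#(ys ! i, rotate1 ys ! i)#} =
         mset (cyc_pairs ys) + {#(ys ! i, n), (n, rotate1 ys ! i)#}"
proof -
  define u where "u = take (Suc i) ys"
  define w where "w = drop (Suc i) ys @ u"
  have "ys \<noteq> []" "w \<noteq> []"
    using assms by (auto simp: u_def w_def)
  have last_w: "last w = ys ! i"
    using assms by (simp add: w_def u_def take_Suc_conv_app_nth)
  have hd_w: "hd w = rotate1 ys ! i"
    using assms \<open>ys \<noteq> []\<close> by (cases "Suc i = length ys")
      (auto simp: w_def u_def nth_rotate1 hd_conv_nth nth_append)
  have "mset (cyc_pairs (ins_after ys i n)) =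
      mset (cyc_pairs (rotate (length u) (ins_after ys i n)))"
    by (simp add: cyc_pairs_rotate mset_rotate)
  also have "rotate (length u) (ins_after ys i n) = n # w"
    using rotate_append[of u "n # drop (Suc i) ys"] by (simp add: ins_after_def u_def w_def)
  also have "cyc_pairs (n # w) = (n, hd w) # zip (butlast w) (tl w) @ [(last w, n)]"
    using \<open>w \<noteq> []\<close> by (cases w) (simp_all add: cyc_pairs_conv_butlast)
  finally have ins: "mset (cyc_pairs (ins_after ys i n)) =
      mset ((n, hd w) # zip (butlast w) (tl w) @ [(last w, n)])" .
  have "mset (cyc_pairs ys) = mset (cyc_pairs (rotate (length u) ys))"
    by (simp add: cyc_pairs_rotate mset_rotate)
  also have "rotate (length u) ys = w"
    using rotate_append[of u "drop (Suc i) ys"] by (simp add: u_def w_def)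
  finally have old: "mset (cyc_pairs ys) = mset (zip (butlast w) (tl w) @ [(last w, hd w)])"
    using \<open>w \<noteq> []\<close> by (simp add: cyc_pairs_conv_butlast)
  show ?thesis
    unfolding ins old last_w [symmetric] hd_w [symmetric] by simp
qed

section \<open>Inserting the largest letter into a cycle\<close>

definition odd_odd_drop :: "nat \<times> nat \<Rightarrow> bool" where
  "odd_odd_drop = (\<lambda>(a, b). b < a \<and> odd a \<and> odd b)"

lemma drop_oo_eq_length_filter: "drop_oo xs = length (filter odd_odd_drop (cyc_pairs xs))"
  unfolding drop_oo_def drops_eq_filter_cyc_pairs filter_filter
  by (intro arg_cong[where f = length] filter_cong) (auto simp: odd_odd_drop_def)

definition drops_end_odd :: "nat list \<Rightarrow> bool" where
  "drops_end_odd xs = (\<forall>(a, b) \<in> set (cyc_pairs xs). b < a \<longrightarrow> odd b)"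

lemma cycles_odd_eq: "cycles_odd n = {xs \<in> cycle_reps n. drops_end_odd xs}"
  unfolding cycles_odd_def drops_end_odd_def drops_eq_filter_cyc_pairs by auto

lemma drops_end_odd_ins_after:
  assumes "i < length ys" and "\<forall>y \<in> set ys. y < n"
  shows "drops_end_odd (ins_after ys i n) \<longleftrightarrow> drops_end_odd ys \<and> odd (rotate1 ys ! i)"
proof -
  let ?a = "ys ! i" and ?b = "rotate1 ys ! i"
  have pairs: "set (cyc_pairs (ins_after ys i n)) \<union> {(?a, ?b)} =
      set (cyc_pairs ys) \<union> {(?a, n), (n, ?b)}"
    using arg_cong[OF mset_cyc_pairs_ins_after[OF assms(1)], of set_mset] by simp
  have "?a < n" "?b < n"
    using assms nth_mem[of i ys] nth_mem[of i "rotate1 ys"] by simp_all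
  show ?thesis
  proof
    assume new: "drops_end_odd (ins_after ys i n)"
    have "(n, ?b) \<in> set (cyc_pairs (ins_after ys i n)) \<union> {(?a, ?b)}"
      unfolding pairs by simp
    then have "(n, ?b) \<in> set (cyc_pairs (ins_after ys i n))"
      using \<open>?a < n\<close> by auto
    then have "odd ?b"
      using new \<open>?b < n\<close> by (auto simp: drops_end_odd_def)
    moreover have "drops_end_odd ys"
      unfolding drops_end_odd_def
    proof
      fix p assume "p \<in> set (cyc_pairs ys)"
      then have "p \<in> set (cyc_pairs (ins_after ys i n)) \<or> p = (?a, ?b)"
        using pairs by blast
      then show "case p of (a, b) \<Rightarrow> b < a \<longrightarrow> odd b"
        using new \<open>odd ?b\<close> by (auto simp: drops_end_odd_def)
    qed
    ultimately show "drops_end_odd ys \<and> odd ?b"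
      by simp
  next
    assume old: "drops_end_odd ys \<and> odd ?b"
    show "drops_end_odd (ins_after ys i n)"
      unfolding drops_end_odd_def
    proof
      fix p assume "p \<in> set (cyc_pairs (ins_after ys i n))"
      then have "p \<in> set (cyc_pairs ys) \<or> p = (?a, n) \<or> p = (n, ?b)"
        using pairs by blast
      then show "case p of (a, b) \<Rightarrow> b < a \<longrightarrow> odd b"
        using old \<open>?a < n\<close> by (auto simp: drops_end_odd_def)
    qed
  qed
qed

lemma drop_oo_ins_after:
  assumes "i < length ys" and "\<forall>y \<in> set ys. y < n" and "odd (rotate1 ys ! i)"
  shows "drop_oo (ins_after ys i n) + of_bool (odd_odd_drop (ys ! i, rotate1 ys ! i)) =
         drop_oo ys + of_bool (odd n)"
proof -
  have count: "drop_oo xs = size (filter_mset odd_odd_drop (mset (cyc_pairs xs)))" for xs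
    unfolding drop_oo_eq_length_filter by (metis mset_filter size_mset)
  have "ys ! i < n" "rotate1 ys ! i < n"
    using assms nth_mem[of i ys] nth_mem[of i "rotate1 ys"] by simp_all
  moreover have "size (filter_mset odd_odd_drop
      (mset (cyc_pairs (ins_after ys i n)) + {#(ys ! i, rotate1 ys ! i)#})) =
    size (filter_mset odd_odd_drop (mset (cyc_pairs ys) + {#(ys ! i, n), (n, rotate1 ys ! i)#}))"
    using mset_cyc_pairs_ins_after[OF assms(1)] by simp
  ultimately show ?thesis
    using assms(3) unfolding count by (auto simp: odd_odd_drop_def)
qed

lemma length_cycle_reps: "xs \<in> cycle_reps n \<Longrightarrow> length xs = n"
  unfolding cycle_reps_def
  by (metis (mono_tags) card_atLeastAtMost diff_Suc_1 distinct_card mem_Collect_eq)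

lemma finite_cycle_reps: "finite (cycle_reps n)"
proof (rule finite_subset)
  show "cycle_reps n \<subseteq> {xs. set xs \<subseteq> {1..n} \<and> length xs = n}"
    using length_cycle_reps by (auto simp: cycle_reps_def)
qed (rule finite_lists_length_eq, simp)

lemma ins_after_in_cycle_reps:
  assumes "ys \<in> cycle_reps m" and "i < m"
  shows "ins_after ys i (Suc m) \<in> cycle_reps (Suc m)"
proof -
  have ys: "set ys = {1..m}" "length ys = m" "hd ys = 1"
    using assms(1) by (simp_all add: cycle_reps_def length_cycle_reps)
  have "set (ins_after ys i (Suc m)) = insert (Suc m) (set ys)"
    using set_append[of "take (Suc i) ys" "drop (Suc i) ys"] by (simp add: ins_after_def)
  also have "\<dots> = {1..Suc m}"
    using ys(1) by auto
  finally have set: "set (ins_after ys i (Suc m)) = {1..Suc m}" .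
  moreover have "length (ins_after ys i (Suc m)) = Suc m"
    using assms(2) ys(2) by (simp add: ins_after_def)
  moreover have "hd (ins_after ys i (Suc m)) = 1"
    using assms(2) ys by (cases ys) (simp_all add: ins_after_def)
  ultimately show ?thesis
    unfolding cycle_reps_def by (simp add: card_distinct)
qed

lemma cycle_reps_Suc_obtain_ins_after:
  assumes "xs \<in> cycle_reps (Suc m)" and "m \<ge> 1"
  obtains ys i where "ys \<in> cycle_reps m" "i < m" "xs = ins_after ys i (Suc m)"
proof -
  have xs: "set xs = {1..Suc m}" "distinct xs" "hd xs = 1" "length xs = Suc m"
    using assms(1) by (simp_all add: cycle_reps_def length_cycle_reps)
  then have "Suc m \<in> set xs"
    by simp
  then obtain t d where split: "xs = t @ Suc m # d"
    by (blast dest: split_list)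
  have "t \<noteq> []"
    using xs(3) assms(2) by (cases t) (simp_all add: split)
  define ys where "ys = t @ d"
  have "distinct ys" "Suc m \<notin> set ys"
    using xs(2) by (simp_all add: split ys_def)
  moreover have "set xs = insert (Suc m) (set ys)"
    by (simp add: split ys_def)
  ultimately have "set ys = {1..Suc m} - {Suc m}"
    using xs(1) by (metis Diff_insert_absorb)
  also have "\<dots> = {1..m}"
    by auto
  finally have "set ys = {1..m}" .
  moreover have "hd ys = 1"
    using xs(3) \<open>t \<noteq> []\<close> by (simp add: split ys_def)
  ultimately have "ys \<in> cycle_reps m"
    using assms(2) \<open>distinct ys\<close> by (simp add: cycle_reps_def)
  moreover have "length t - 1 < m"
    using \<open>t \<noteq> []\<close> xs(4) by (cases t) (simp_all add: split)
  moreover have "xs = ins_after ys (length t - 1) (Suc m)"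
    using \<open>t \<noteq> []\<close> by (simp add: ins_after_def ys_def split)
  ultimately show ?thesis
    using that by blast
qed

lemma inj_on_ins_after:
  "inj_on (\<lambda>(ys, i). ins_after ys i n) {(ys, i). n \<notin> set ys \<and> i < length ys}"
proof (rule inj_onI, clarify)
  fix ys i ys' i'
  assume "n \<notin> set ys" "i < length ys" "n \<notin> set ys'" "i' < length ys'"
    and "ins_after ys i n = ins_after ys' i' n"
  moreover have "n \<notin> set (take (Suc i) ys)" "n \<notin> set (drop (Suc i) ys)"
    using \<open>n \<notin> set ys\<close> by (meson in_set_takeD in_set_dropD)+
  ultimately have take: "take (Suc i) ys = take (Suc i') ys'"
    and drop: "drop (Suc i) ys = drop (Suc i') ys'"
    unfolding ins_after_def by (simp_all add: append_Cons_eq_iff)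
  have "Suc i = Suc i'"
    using arg_cong[OF take, of length] \<open>i < length ys\<close> \<open>i' < length ys'\<close> by simp
  moreover have "ys = ys'"
    by (metis append_take_drop_id take drop)
  ultimately show "ys = ys' \<and> i = i'"
    by simp
qed

lemma cycles_odd_Suc_eq_image:
  assumes "m \<ge> 1"
  shows "cycles_odd (Suc m) = (\<lambda>(ys, i). ins_after ys i (Suc m)) `
           (SIGMA ys:cycles_odd m. {i. i < m \<and> odd (rotate1 ys ! i)})"
proof -
  have bounded: "\<forall>y \<in> set ys. y < Suc m" if "ys \<in> cycle_reps m" for ys
    using that by (auto simp: cycle_reps_def)
  have odd_iff: "ins_after ys i (Suc m) \<in> cycles_odd (Suc m) \<longleftrightarrow>
      ys \<in> cycles_odd m \<and> odd (rotate1 ys ! i)" if "ys \<in> cycle_reps m" "i < m" for ys i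
    using that ins_after_in_cycle_reps drops_end_odd_ins_after[OF _ bounded]
    by (auto simp: cycles_odd_eq length_cycle_reps)
  show ?thesis
  proof (intro equalityI subsetI)
    fix xs assume "xs \<in> cycles_odd (Suc m)"
    moreover from this obtain ys i where "ys \<in> cycle_reps m" "i < m" "xs = ins_after ys i (Suc m)"
      using assms by (auto simp: cycles_odd_eq elim: cycle_reps_Suc_obtain_ins_after)
    ultimately show "xs \<in> (\<lambda>(ys, i). ins_after ys i (Suc m)) `
           (SIGMA ys:cycles_odd m. {i. i < m \<and> odd (rotate1 ys ! i)})"
      using odd_iff by auto
  qed (use odd_iff in \<open>auto simp: cycles_odd_eq\<close>)
qed

lemma card_odd_atLeastAtMost: "card {v \<in> {1..m}. odd v} = Suc m div 2"
proof (induction m)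
  case (Suc m)
  have "{v \<in> {1..Suc m}. odd v} =
      {v \<in> {1..m}. odd v} \<union> (if odd (Suc m) then {Suc m} else {})"
    by (auto simp: le_Suc_eq)
  then show ?case
    using Suc by (auto simp: card_insert_if)
qed simp

lemma card_odd_successors:
  assumes "ys \<in> cycle_reps m"
  shows "card {i. i < m \<and> odd (rotate1 ys ! i)} = Suc m div 2"
proof -
  have "card {i. i < m \<and> odd (rotate1 ys ! i)} = length (filter odd (rotate1 ys))"
    using assms by (simp add: length_filter_conv_card length_cycle_reps)
  also have "\<dots> = length (filter odd ys)"
    by (cases ys) simp_all
  also have "\<dots> = card {v \<in> {1..m}. odd v}"
    using assms by (simp add: cycle_reps_def distinct_card[symmetric])
  finally show ?thesis
    using card_odd_atLeastAtMost[of m] by simp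
qed

definition cycle_poly :: "nat \<Rightarrow> int poly" where
  "cycle_poly n = (\<Sum>xs\<in>cycles_odd n. polyX ^ drop_oo xs)"

lemma sum_drop_oo_ins_after:
  assumes "ys \<in> cycles_odd m"
  shows "(\<Sum>i | i < m \<and> odd (rotate1 ys ! i). polyX ^ drop_oo (ins_after ys i (Suc m))) =
         polyX ^ of_bool (odd (Suc m)) * ins_op (Suc m div 2) (polyX ^ drop_oo ys)"
proof -
  have ys: "ys \<in> cycle_reps m"
    using assms by (simp add: cycles_odd_eq)
  define I where "I = {i. i < m \<and> odd (rotate1 ys ! i)}"
  define I_oo where "I_oo = {i \<in> I. odd_odd_drop (ys ! i, rotate1 ys ! i)}"
  define k where "k = drop_oo ys"
  define e :: nat where "e = of_bool (odd (Suc m))"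
  have "finite I" "I_oo \<subseteq> I"
    by (auto simp: I_def I_oo_def)
  have card_I_oo: "card I_oo = k"
  proof -
    have "k = card {i. i < length (cyc_pairs ys) \<and> odd_odd_drop (cyc_pairs ys ! i)}"
      unfolding k_def drop_oo_eq_length_filter by (rule length_filter_conv_card)
    also have "{i. i < length (cyc_pairs ys) \<and> odd_odd_drop (cyc_pairs ys ! i)} = I_oo"
      using length_cycle_reps[OF ys]
      by (auto simp: I_oo_def I_def cyc_pairs_nth odd_odd_drop_def)
    finally show ?thesis ..
  qed
  have card_I: "card I = Suc m div 2"
    unfolding I_def by (rule card_odd_successors[OF ys])
  have "k \<le> Suc m div 2"
    using card_mono[OF \<open>finite I\<close> \<open>I_oo \<subseteq> I\<close>] card_I_oo card_I by simp
  have summand: "polyX ^ drop_oo (ins_after ys i (Suc m)) =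
      polyX ^ e * (if i \<in> I_oo then polyX ^ (k - 1) else polyX ^ k)" if "i \<in> I" for i
  proof -
    have count: "drop_oo (ins_after ys i (Suc m)) + of_bool (i \<in> I_oo) = k + e"
      using that drop_oo_ins_after[of i ys "Suc m"] ys length_cycle_reps[OF ys]
      by (auto simp: I_def I_oo_def k_def e_def cycle_reps_def)
    have "k \<noteq> 0" if "i \<in> I_oo"
      using that card_I_oo finite_subset[OF \<open>I_oo \<subseteq> I\<close> \<open>finite I\<close>] card_gt_0_iff by blast
    with count have "drop_oo (ins_after ys i (Suc m)) = e + (if i \<in> I_oo then k - 1 else k)"
      by auto
    then show ?thesis
      by (simp add: power_add)
  qed
  have "(\<Sum>i\<in>I. polyX ^ drop_oo (ins_after ys i (Suc m))) =
      polyX ^ e * (\<Sum>i\<in>I. if i \<in> I_oo then polyX ^ (k - 1) else polyX ^ k)"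
    by (simp add: summand sum_distrib_left)
  also have "(\<Sum>i\<in>I. if i \<in> I_oo then polyX ^ (k - 1) else polyX ^ k) =
      of_nat (card I_oo) * polyX ^ (k - 1) + of_nat (card (I - I_oo)) * polyX ^ k"
    using \<open>finite I\<close> \<open>I_oo \<subseteq> I\<close> by (simp add: sum.If_cases Int_absorb1 Diff_eq)
  also have "\<dots> = ins_op (Suc m div 2) (polyX ^ k)"
    using \<open>finite I\<close> \<open>I_oo \<subseteq> I\<close> \<open>k \<le> Suc m div 2\<close>
    by (simp add: ins_op_power_X card_I_oo card_I card_Diff_subset finite_subset)
  finally show ?thesis
    by (simp add: I_def e_def k_def)
qed

lemma cycle_poly_Suc:
  assumes "m \<ge> 1"
  shows "cycle_poly (Suc m) = polyX ^ of_bool (odd (Suc m)) * ins_op (Suc m div 2) (cycle_poly m)"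
proof -
  let ?S = "SIGMA ys:cycles_odd m. {i. i < m \<and> odd (rotate1 ys ! i)}"
  have "Suc m \<notin> set ys \<and> length ys = m" if "ys \<in> cycle_reps m" for ys
    using that length_cycle_reps[OF that] by (auto simp: cycle_reps_def)
  then have "inj_on (\<lambda>(ys, i). ins_after ys i (Suc m)) ?S"
    by (intro inj_on_subset[OF inj_on_ins_after]) (auto simp: cycles_odd_eq)
  then have "cycle_poly (Suc m) = (\<Sum>(ys, i)\<in>?S. polyX ^ drop_oo (ins_after ys i (Suc m)))"
    unfolding cycle_poly_def cycles_odd_Suc_eq_image[OF assms]
    by (subst sum.reindex) (simp_all add: case_prod_beta')
  also have "\<dots> = (\<Sum>ys\<in>cycles_odd m.
      \<Sum>i | i < m \<and> odd (rotate1 ys ! i). polyX ^ drop_oo (ins_after ys i (Suc m)))"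
    by (rule sum.Sigma[symmetric]) (auto simp: cycles_odd_eq finite_cycle_reps)
  also have "\<dots> = polyX ^ of_bool (odd (Suc m)) * ins_op (Suc m div 2) (cycle_poly m)"
    by (simp add: sum_drop_oo_ins_after cycle_poly_def ins_op_sum sum_distrib_left)
  finally show ?thesis .
qed

lemma cycle_poly_0: "cycle_poly 0 = 0"
  by (simp add: cycle_poly_def cycles_odd_def cycle_reps_def)

lemma cycle_poly_1: "cycle_poly (Suc 0) = 1"
proof -
  have "cycle_reps 1 = {[1]}"
  proof
    show "cycle_reps 1 \<subseteq> {[1]}"
    proof
      fix xs assume xs: "xs \<in> cycle_reps 1"
      then have "length xs = 1"
        by (rule length_cycle_reps)
      moreover have "hd xs = 1"
        using xs by (simp add: cycle_reps_def)
      ultimately show "xs \<in> {[1]}"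
        by (cases xs) auto
    qed
  qed (simp add: cycle_reps_def)
  moreover have "drops [1] = []"
    by (simp add: drops_def cyc_next_def)
  ultimately have "[1] \<in> cycles_odd 1" "cycles_odd 1 \<subseteq> {[1]}"
    by (auto simp: cycles_odd_def)
  then have "cycles_odd 1 = {[1]}"
    by blast
  then show ?thesis
    by (simp add: cycle_poly_def drop_oo_def drops_def cyc_next_def)
qed

section \<open>Solving the recurrence\<close>

(* hsq m j = h_j(1^2, ..., m^2), the complete homogeneous symmetric polynomial of degree j in the
   squares 1^2, ..., m^2, so that 1 / prod_{k=1..m} (1 - k^2 u) = sum_j hsq m j u^j. *)
fun hsq :: "nat \<Rightarrow> nat \<Rightarrow> nat" where
  "hsq 0 j = of_bool (j = 0)"
| "hsq (Suc m) 0 = 1"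
| "hsq (Suc m) (Suc j) = hsq m (Suc j) + (Suc m)\<^sup>2 * hsq (Suc m) j"

lemma hsq_0_right [simp]: "hsq m 0 = 1"
  by (cases m) simp_all

(* The coefficients of t^(2N-1) and t^(2N) on the right-hand side of the theorem. *)
definition rhs_coeff_odd :: "nat \<Rightarrow> int poly" where
  "rhs_coeff_odd N =
     (\<Sum>m<N. of_nat (fact m ^ 2 * hsq (Suc m) (N - Suc m)) * (polyX - 1) ^ (N - Suc m))"

definition rhs_coeff_even :: "nat \<Rightarrow> int poly" where
  "rhs_coeff_even N =
     (\<Sum>m<N. of_nat (fact (Suc m) * fact m * hsq (Suc m) (N - Suc m)) *
        (polyX - 1) ^ (N - Suc m))"

lemma ins_op_rhs_coeff_odd: "ins_op N (rhs_coeff_odd N) = rhs_coeff_even N"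
  unfolding rhs_coeff_odd_def rhs_coeff_even_def ins_op_sum_mult_power_X_minus_1
  by (intro sum.cong refl) (simp add: power2_eq_square algebra_simps)

lemma X_mult_ins_op_rhs_coeff_even:
  assumes "N \<ge> 1"
  shows "polyX * ins_op N (rhs_coeff_even N) = rhs_coeff_odd (Suc N)"
proof -
  define F where
    "F k = of_nat (fact (Suc k) ^ 2 * hsq (Suc k) (N - Suc k)) * (polyX - 1) ^ (N - Suc k)" for k
  define G where "G k = of_nat (fact k ^ 2 * hsq (Suc k) (N - k)) * (polyX - 1) ^ (N - k)" for k
  define a where "a k = of_nat (fact k ^ 2 * hsq k (N - k)) * (polyX - 1) ^ (N - k)" for k
  have ins_op_eq: "ins_op N (rhs_coeff_even N) = (\<Sum>k<N. F k)"
    unfolding rhs_coeff_even_def ins_op_sum_mult_power_X_minus_1 F_def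
    by (intro sum.cong refl) (simp add: power2_eq_square algebra_simps)
  have G_eq: "G k = a k + (polyX - 1) * F k" if "k < N" for k
  proof -
    have "N - k = Suc (N - Suc k)"
      using that by simp
    then show ?thesis
      unfolding G_def a_def F_def by (simp add: power2_eq_square algebra_simps)
  qed
  have "rhs_coeff_odd (Suc N) = (\<Sum>k<N. G k) + a N"
    unfolding rhs_coeff_odd_def by (simp add: G_def a_def)
  also have "\<dots> = (\<Sum>k<Suc N. a k) + (polyX - 1) * (\<Sum>k<N. F k)"
    by (simp add: G_eq sum.distrib sum_distrib_left)
  also have "(\<Sum>k<Suc N. a k) = (\<Sum>k<N. F k)"
    using assms unfolding sum.lessThan_Suc_shift by (simp add: a_def F_def)
  finally show ?thesis
    unfolding ins_op_eq by (simp add: algebra_simps)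
qed

lemma cycle_poly_odd_even:
  "cycle_poly (2 * N + 1) = rhs_coeff_odd (Suc N) \<and>
   cycle_poly (2 * N + 2) = rhs_coeff_even (Suc N)"
proof (induction N)
  case 0
  show ?case
    using cycle_poly_1 cycle_poly_Suc[of 1] ins_op_rhs_coeff_odd[of 1]
    by (simp add: rhs_coeff_odd_def numeral_2_eq_2)
next
  case (Suc N)
  have odd: "cycle_poly (2 * Suc N + 1) = rhs_coeff_odd (Suc (Suc N))"
    using cycle_poly_Suc[of "2 * N + 2"] Suc.IH X_mult_ins_op_rhs_coeff_even[of "Suc N"] by simp
  moreover have "cycle_poly (2 * Suc N + 2) = ins_op (Suc (Suc N)) (cycle_poly (2 * Suc N + 1))"
    using cycle_poly_Suc[of "2 * N + 3"] by (simp add: numeral_3_eq_3)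
  ultimately show ?case
    using ins_op_rhs_coeff_odd by simp
qed

lemma cycle_poly_eq_rhs_coeff:
  "cycle_poly n = (if odd n then rhs_coeff_odd (Suc n div 2) else rhs_coeff_even (n div 2))"
proof -
  have "n = 0 \<or> (\<exists>N. n = 2 * N + 1) \<or> (\<exists>N. n = 2 * N + 2)"
    by presburger
  then consider "n = 0" | N where "n = 2 * N + 1" | N where "n = 2 * N + 2"
    by blast
  then show ?thesis
  proof cases
    case 1
    then show ?thesis
      by (simp add: cycle_poly_0 rhs_coeff_even_def)
  qed (use cycle_poly_odd_even in simp_all)
qed

section \<open>The generating function\<close>

lemma fps_sums_coeffwise:
  fixes f :: "nat \<Rightarrow> 'a::ab_group_add fps"
  assumes "\<And>i k. k < i \<Longrightarrow> f i $ k = 0"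
  shows "f sums Abs_fps (\<lambda>k. \<Sum>i\<le>k. f i $ k)"
  unfolding sums_def
proof (rule tendsto_fpsI)
  fix k
  have "(\<Sum>i<n. f i) $ k = (\<Sum>i\<le>k. f i $ k)" if "n \<ge> Suc k" for n
  proof -
    have "(\<Sum>i<n. f i) $ k = (\<Sum>i<n. f i $ k)"
      by (simp add: fps_sum_nth)
    also have "\<dots> = (\<Sum>i\<le>k. f i $ k)"
      using that assms by (intro sum.mono_neutral_right) auto
    finally show ?thesis .
  qed
  then show "\<forall>\<^sub>F n in sequentially. (\<Sum>i<n. f i) $ k = Abs_fps (\<lambda>k. \<Sum>i\<le>k. f i $ k) $ k"
    by (simp add: eventually_sequentially) blast
qed

definition hsq_series :: "nat \<Rightarrow> int poly fps" where
  "hsq_series m =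
     Abs_fps (\<lambda>k. if even k then of_nat (hsq m (k div 2)) * (polyX - 1) ^ (k div 2) else 0)"

lemma hsq_series_nth:
  "hsq_series m $ k = (if even k then of_nat (hsq m (k div 2)) * (polyX - 1) ^ (k div 2) else 0)"
  by (simp add: hsq_series_def)

lemma hsq_series_0: "hsq_series 0 = 1"
  by (rule fps_ext) (auto simp: hsq_series_nth)

lemma hsq_series_Suc:
  "(1 + fps_const (of_nat ((Suc m)\<^sup>2) * (1 - polyX)) * fps_X ^ 2) * hsq_series (Suc m) =
   hsq_series m"
proof (rule fps_ext)
  fix k
  let ?c = "of_nat ((Suc m)\<^sup>2) * (1 - polyX)"
  have "((1 + fps_const ?c * fps_X ^ 2) * hsq_series (Suc m)) $ k =
      hsq_series (Suc m) $ k + ?c * (if k < 2 then 0 else hsq_series (Suc m) $ (k - 2))"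
    by (simp add: distrib_right mult.assoc fps_X_power_mult_nth)
  also have "\<dots> = hsq_series m $ k"
  proof (cases "even k")
    case True
    then obtain j where k: "k = 2 * j"
      by blast
    show ?thesis
    proof (cases j)
      case (Suc i)
      have "k - 2 = 2 * i"
        using k Suc by simp
      have ring: "of_nat (h + s * h') * (x - 1) ^ Suc i +
          of_nat s * (1 - x) * (of_nat h' * (x - 1) ^ i) = of_nat h * (x - 1) ^ Suc i"
        for x :: "int poly" and h s h' :: nat
        by (simp add: algebra_simps)
      show ?thesis
        using k Suc \<open>k - 2 = 2 * i\<close> ring[of "hsq m (Suc i)" "(Suc m)\<^sup>2" "hsq (Suc m) i" polyX]
        by (simp add: hsq_series_nth del: power_Suc)
    qed (simp add: k hsq_series_nth)
  qed (auto simp: hsq_series_nth)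
  finally show "((1 + fps_const ?c * fps_X ^ 2) * hsq_series (Suc m)) $ k = hsq_series m $ k" .
qed

lemma denom_mult_hsq_series: "denom m * hsq_series m = 1"
proof (induction m)
  case (Suc m)
  have "denom (Suc m) = denom m * (1 + fps_const (of_nat ((Suc m)\<^sup>2) * (1 - polyX)) * fps_X ^ 2)"
    by (simp add: denom_def)
  then show ?case
    using Suc hsq_series_Suc[of m] by (simp add: mult.assoc)
qed (simp add: denom_def hsq_series_0)

lemma denom_inv_eq_hsq_series: "denom_inv m = hsq_series m"
proof -
  have "denom m $ 0 = 1"
    using arg_cong[OF denom_mult_hsq_series[of m], of "\<lambda>f. f $ 0"] by (simp add: hsq_series_nth)
  then have "denom m * denom_inv m = 1"
    unfolding denom_inv_def by (intro fps_right_inverse) simp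
  then have "hsq_series m = (denom m * hsq_series m) * denom_inv m"
    by (metis mult.assoc mult.commute mult_1_right)
  then show ?thesis
    by (simp add: denom_mult_hsq_series)
qed

lemma termA_nth:
  "termA m $ k =
     (if k < 2 * m then 0 else of_nat (fact m * fact (m - 1)) * hsq_series m $ (k - 2 * m))"
  unfolding termA_def denom_inv_eq_hsq_series by (simp add: mult.assoc fps_X_power_mult_nth)

lemma termB_nth:
  "termB m $ k =
     (if k < 2 * m - 1 then 0 else of_nat (fact (m - 1) ^ 2) * hsq_series m $ (k - (2 * m - 1)))"
  unfolding termB_def denom_inv_eq_hsq_series by (simp add: mult.assoc fps_X_power_mult_nth)

lemma sum_termA_nth:
  "(\<Sum>i\<le>n. termA (Suc i) $ n) = (if even n then rhs_coeff_even (n div 2) else 0)"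
proof (cases "even n")
  case True
  then obtain N where n: "n = 2 * N"
    by blast
  have "(\<Sum>i\<le>n. termA (Suc i) $ n) = (\<Sum>i<N. termA (Suc i) $ n)"
    by (rule sum.mono_neutral_right) (auto simp: n termA_nth)
  also have "\<dots> = rhs_coeff_even N"
    unfolding rhs_coeff_even_def
  proof (rule sum.cong)
    fix i assume "i \<in> {..<N}"
    then have "n - 2 * Suc i = 2 * (N - Suc i)"
      by (simp add: n)
    then show "termA (Suc i) $ n =
        of_nat (fact (Suc i) * fact i * hsq (Suc i) (N - Suc i)) * (polyX - 1) ^ (N - Suc i)"
      using \<open>i \<in> {..<N}\<close> by (simp add: termA_nth hsq_series_nth n)
  qed simp
  finally show ?thesis
    by (simp add: n)
next
  case False
  have "termA (Suc i) $ n = 0" for i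
  proof -
    have "n < 2 * Suc i \<or> odd (n - 2 * Suc i)"
      using False by presburger
    then show ?thesis
      by (auto simp: termA_nth hsq_series_nth)
  qed
  then show ?thesis
    using False by simp
qed

lemma sum_termB_nth:
  "(\<Sum>i\<le>n. termB (Suc i) $ n) = (if odd n then rhs_coeff_odd (Suc n div 2) else 0)"
proof (cases "odd n")
  case True
  then obtain N where n: "n = 2 * N + 1"
    by (blast elim: oddE)
  have "(\<Sum>i\<le>n. termB (Suc i) $ n) = (\<Sum>i<Suc N. termB (Suc i) $ n)"
    by (rule sum.mono_neutral_right) (auto simp: n termB_nth)
  also have "\<dots> = rhs_coeff_odd (Suc N)"
    unfolding rhs_coeff_odd_def
  proof (rule sum.cong)
    fix i assume "i \<in> {..<Suc N}"
    then have "n - (2 * Suc i - 1) = 2 * (Suc N - Suc i)"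
      by (simp add: n)
    then show "termB (Suc i) $ n =
        of_nat (fact i ^ 2 * hsq (Suc i) (Suc N - Suc i)) * (polyX - 1) ^ (Suc N - Suc i)"
      using \<open>i \<in> {..<Suc N}\<close> by (simp add: termB_nth hsq_series_nth n)
  qed simp
  finally show ?thesis
    by (simp add: n)
next
  case False
  have "termB (Suc i) $ n = 0" for i
  proof -
    have "n < 2 * Suc i - 1 \<or> odd (n - (2 * Suc i - 1))"
      using False by presburger
    then show ?thesis
      by (auto simp: termB_nth hsq_series_nth)
  qed
  then show ?thesis
    using False by simp
qed

theorem theorem1p2:
  shows "summable (\<lambda>m. termA (Suc m)) \<and> summable (\<lambda>m. termB (Suc m)) \<and>
         lhs_gf = (\<Sum>m. termA (Suc m)) + (\<Sum>m. termB (Suc m))"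
proof -
  have A: "(\<lambda>m. termA (Suc m)) sums Abs_fps (\<lambda>n. \<Sum>i\<le>n. termA (Suc i) $ n)"
    by (rule fps_sums_coeffwise) (simp add: termA_nth)
  have B: "(\<lambda>m. termB (Suc m)) sums Abs_fps (\<lambda>n. \<Sum>i\<le>n. termB (Suc i) $ n)"
    by (rule fps_sums_coeffwise) (simp add: termB_nth)
  have "lhs_gf =
      Abs_fps (\<lambda>n. \<Sum>i\<le>n. termA (Suc i) $ n) + Abs_fps (\<lambda>n. \<Sum>i\<le>n. termB (Suc i) $ n)"
    by (rule fps_ext) (simp add: lhs_gf_def sum_termA_nth sum_termB_nth cycle_poly_eq_rhs_coeff
        flip: cycle_poly_def)
  with A B show ?thesis
    by (simp add: sums_summable sums_unique[symmetric])
qed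

end
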